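(* Let $W_{(\alpha,\beta)}=(T_1,T_2)$ be a 2-variable weighted shift on $\ell^2(\mathbb{Z}_+^2)$, and let $$L=\begin{pmatrix} T_1^*T_1 & T_2^*T_1\\ T_1^*T_2 & T_2^*T_2\end{pmatrix},\qquad R=\begin{pmatrix} T_1T_1^* & T_1T_2^*\\ T_2T_1^* & T_2T_2^*\end{pmatrix}$$ acting on $\ell^2(\mathbb{Z}_+^2)\oplus\ell^2(\mathbb{Z}_+^2)$. For $n\ge 0$ let $\mathcal{K}(n)$ be the closed span of $\{e_{(k_1,k_2)}: k_1+k_2=n\}$. Then $\mathcal{K}(n)\oplus\mathcal{K}(n)$ reduces $L$ and $R$, and, denoting by $L|_{\mathcal{K}(n)}$, $R|_{\mathcal{K}(n)}$ the restrictions to it, $L|_{\mathcal{K}(n)}$ is unitarily equivalent to $$(\alpha_{(0,n)}^2)\oplus\Big[\bigoplus_{i=1}^n\begin{pmatrix}\alpha_{(i,n-i)}^2 & \alpha_{(i-1,n-i+1)}\beta_{(i,n-i)}\\ \alpha_{(i-1,n-i+1)}\beta_{(i,n-i)} & \beta_{(i-1,n-i+1)}^2\end{pmatrix}\Big]\oplus(\beta_{(n,0)}^2)$$ and $R|_{\mathcal{K}(n)}$ is unitarily equivalent to $$(0)\oplus\Big[\bigoplus_{i=1}^n\begin{pmatrix}\alpha_{(i-1,n-i)}^2 & \alpha_{(i-1,n-i)}\beta_{(i-1,n-i)}\\ \alpha_{(i-1,n-i)}\beta_{(i-1,n-i)} & \beta_{(i-1,n-i)}^2\end{pmatrix}\B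ig]\oplus(0).$$
   Context: Given bounded double-indexed sequences of positive reals $\alpha=(\alpha_{\mathbf{k}})$, $\beta=(\beta_{\mathbf{k}})$, $\mathbf{k}=(k_1,k_2)\in\mathbb{Z}_+^2$, the 2-variable weighted shift $W_{(\alpha,\beta)}=(T_1,T_2)$ acts on $\ell^2(\mathbb{Z}_+^2)$ with canonical orthonormal basis $\{e_{\mathbf{k}}\}$ by $T_1e_{\mathbf{k}}=\alpha_{\mathbf{k}}e_{\mathbf{k}+\varepsilon_1}$, $T_2e_{\mathbf{k}}=\beta_{\mathbf{k}}e_{\mathbf{k}+\varepsilon_2}$, with $\varepsilon_1=(1,0)$, $\varepsilon_2=(0,1)$. An operator matrix $(M_{ij})$ acts on $\mathcal{H}\oplus\mathcal{H}$ by $(h_1,h_2)\mapsto(M_{11}h_1+M_{12}h_2,\,M_{21}h_1+M_{22}h_2)$. For $n=0$ the middle direct sum is empty. *)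

theory Defs
  imports "HOL-Analysis.Infinite_Sum" "Jordan_Normal_Form.Matrix"
begin

type_synonym idx = "nat \<times> nat"

definition ell2 :: "(idx \<Rightarrow> complex) set" where
  "ell2 = {x. (\<lambda>k. (cmod (x k))\<^sup>2) summable_on UNIV}"

definition ip :: "(idx \<Rightarrow> complex) \<Rightarrow> (idx \<Rightarrow> complex) \<Rightarrow> complex" where
  "ip x y = (\<Sum>\<^sub>\<infinity>k. x k * cnj (y k))"

definition ebasis :: "idx \<Rightarrow> (idx \<Rightarrow> complex)" where
  "ebasis k = (\<lambda>j. if j = k then 1 else 0)"

(* T1 e_k = alpha_k e_(k+eps1), extended coordinatewise *)
definition shift1 :: "(idx \<Rightarrow> real) \<Rightarrow> (idx \<Rightarrow> complex) \<Rightarrow> (idx \<Rightarrow> complex)" where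
  "shift1 \<alpha> x = (\<lambda>(k1, k2). if k1 \<ge> 1 then complex_of_real (\<alpha> (k1 - 1, k2)) * x (k1 - 1, k2) else 0)"

(* T2 e_k = beta_k e_(k+eps2), extended coordinatewise *)
definition shift2 :: "(idx \<Rightarrow> real) \<Rightarrow> (idx \<Rightarrow> complex) \<Rightarrow> (idx \<Rightarrow> complex)" where
  "shift2 \<beta> x = (\<lambda>(k1, k2). if k2 \<ge> 1 then complex_of_real (\<beta> (k1, k2 - 1)) * x (k1, k2 - 1) else 0)"

definition adj :: "((idx \<Rightarrow> complex) \<Rightarrow> (idx \<Rightarrow> complex)) \<Rightarrow> ((idx \<Rightarrow> complex) \<Rightarrow> (idx \<Rightarrow> complex))" where
  "adj T = (SOME S. (\<forall>y\<in>ell2. S y \<in> ell2) \<and> (\<forall>x\<in>ell2. \<forall>y\<in>ell2. ip (T x) y = ip x (S y)))"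

type_synonym vec2 = "(idx \<Rightarrow> complex) \<times> (idx \<Rightarrow> complex)"

definition ell2sum :: "vec2 set" where
  "ell2sum = ell2 \<times> ell2"

definition ip2 :: "vec2 \<Rightarrow> vec2 \<Rightarrow> complex" where
  "ip2 x y = ip (fst x) (fst y) + ip (snd x) (snd y)"

definition add2 :: "vec2 \<Rightarrow> vec2 \<Rightarrow> vec2" where
  "add2 x y = ((\<lambda>k. fst x k + fst y k), (\<lambda>k. snd x k + snd y k))"

definition scale2 :: "complex \<Rightarrow> vec2 \<Rightarrow> vec2" where
  "scale2 c x = ((\<lambda>k. c * fst x k), (\<lambda>k. c * snd x k))"

definition opmat ::
  "((idx \<Rightarrow> complex) \<Rightarrow> (idx \<Rightarrow> complex)) \<Rightarrow> ((idx \<Rightarrow> complex) \<Rightarrow> (idx \<Rightarrow> complex)) \<Rightarrow>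
   ((idx \<Rightarrow> complex) \<Rightarrow> (idx \<Rightarrow> complex)) \<Rightarrow> ((idx \<Rightarrow> complex) \<Rightarrow> (idx \<Rightarrow> complex)) \<Rightarrow> vec2 \<Rightarrow> vec2" where
  "opmat M11 M12 M21 M22 h = ((\<lambda>k. M11 (fst h) k + M12 (snd h) k), (\<lambda>k. M21 (fst h) k + M22 (snd h) k))"

definition Lop :: "(idx \<Rightarrow> real) \<Rightarrow> (idx \<Rightarrow> real) \<Rightarrow> vec2 \<Rightarrow> vec2" where
  "Lop \<alpha> \<beta> = (let T1 = shift1 \<alpha>; T2 = shift2 \<beta> in
     opmat (adj T1 \<circ> T1) (adj T2 \<circ> T1) (adj T1 \<circ> T2) (adj T2 \<circ> T2))"

definition Rop :: "(idx \<Rightarrow> real) \<Rightarrow> (idx \<Rightarrow> real) \<Rightarrow> vec2 \<Rightarrow> vec2" where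
  "Rop \<alpha> \<beta> = (let T1 = shift1 \<alpha>; T2 = shift2 \<beta> in
     opmat (T1 \<circ> adj T1) (T1 \<circ> adj T2) (T2 \<circ> adj T1) (T2 \<circ> adj T2))"

(* K(n) = closed span of {e_(k1,k2) : k1+k2 = n}: the l^2 vectors supported on the
   finite set {k1+k2 = n} (closed span = linear span = this set, as it is finite-dim.) *)
definition Kspace :: "nat \<Rightarrow> (idx \<Rightarrow> complex) set" where
  "Kspace n = {x \<in> ell2. \<forall>k. fst k + snd k \<noteq> n \<longrightarrow> x k = 0}"

definition orth2 :: "vec2 set \<Rightarrow> vec2 set" where
  "orth2 M = {y \<in> ell2sum. \<forall>x\<in>M. ip2 x y = 0}"

definition reduces :: "(vec2 \<Rightarrow> vec2) \<Rightarrow> vec2 set \<Rightarrow> bool" where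
  "reduces A M \<longleftrightarrow> A ` M \<subseteq> M \<and> A ` orth2 M \<subseteq> orth2 M"

definition unit_equiv_restr :: "(vec2 \<Rightarrow> vec2) \<Rightarrow> vec2 set \<Rightarrow> complex mat \<Rightarrow> bool" where
  "unit_equiv_restr A M D \<longleftrightarrow> (\<exists>N. D \<in> carrier_mat N N \<and> (\<exists>U.
      bij_betw U M (carrier_vec N) \<and>
      (\<forall>x\<in>M. \<forall>y\<in>M. U (add2 x y) = U x + U y) \<and>
      (\<forall>c. \<forall>x\<in>M. U (scale2 c x) = c \<cdot>\<^sub>v U x) \<and>
      (\<forall>x\<in>M. \<forall>y\<in>M. ip2 x y = (\<Sum>i<N. vec_index (U x) i * cnj (vec_index (U y) i))) \<and>
      (\<forall>x\<in>M. U (A x) = D *\<^sub>v U x)))"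

definition sq :: "complex \<Rightarrow> complex mat" where
  "sq a = mat 1 1 (\<lambda>_. a)"

definition blk :: "complex \<Rightarrow> complex \<Rightarrow> complex \<Rightarrow> complex \<Rightarrow> complex mat" where
  "blk a b c d = mat 2 2 (\<lambda>(r, s). if r = 0 then (if s = 0 then a else b) else (if s = 0 then c else d))"

definition Lmat :: "(idx \<Rightarrow> real) \<Rightarrow> (idx \<Rightarrow> real) \<Rightarrow> nat \<Rightarrow> complex mat" where
  "Lmat \<alpha> \<beta> n = diag_block_mat
     ([sq (complex_of_real ((\<alpha> (0, n))\<^sup>2))] @
      map (\<lambda>i. blk (complex_of_real ((\<alpha> (i, n - i))\<^sup>2))
                     (complex_of_real (\<alpha> (i - 1, n - i + 1) * \<beta> (i, n - i)))
                     (complex_of_real (\<alpha> (i - 1, n - i + 1) * \<beta> (i, n - i)))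
                     (complex_of_real ((\<beta> (i - 1, n - i + 1))\<^sup>2))) [1..<n+1] @
      [sq (complex_of_real ((\<beta> (n, 0))\<^sup>2))])"

definition Rmat :: "(idx \<Rightarrow> real) \<Rightarrow> (idx \<Rightarrow> real) \<Rightarrow> nat \<Rightarrow> complex mat" where
  "Rmat \<alpha> \<beta> n = diag_block_mat
     ([sq 0] @
      map (\<lambda>i. blk (complex_of_real ((\<alpha> (i - 1, n - i))\<^sup>2))
                     (complex_of_real (\<alpha> (i - 1, n - i) * \<beta> (i - 1, n - i)))
                     (complex_of_real (\<alpha> (i - 1, n - i) * \<beta> (i - 1, n - i)))
                     (complex_of_real ((\<beta> (i - 1, n - i))\<^sup>2))) [1..<n+1] @
      [sq 0])"

end

theory Submission
  imports Defs
begin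

text \<open>
  The shifts and their adjoints move an index \<open>k\<close> by \<open>\<plusminus>\<epsilon>\<^sub>j\<close>, and every entry of \<open>L\<close> and
  \<open>R\<close> is a product of one shift and one adjoint, so both operators preserve each diagonal
  \<open>k\<^sub>1 + k\<^sub>2 = m\<close>; hence \<open>\<K>(n) \<oplus> \<K>(n)\<close> and its orthogonal complement are invariant.
  More precisely, the first component of \<open>L(x\<^sub>1, x\<^sub>2)\<close> at \<open>(i, n - i)\<close> and its second component
  at \<open>(i - 1, n - i + 1)\<close> depend only on \<open>x\<^sub>1(i, n - i)\<close> and \<open>x\<^sub>2(i - 1, n - i + 1)\<close>, and the
  same holds for \<open>R\<close>. Listing the basis of \<open>\<K>(n) \<oplus> \<K>(n)\<close> in these pairs, preceded by
  \<open>e\<^bsub>(0, n)\<^esub> \<oplus> 0\<close> and followed by \<open>0 \<oplus> e\<^bsub>(n, 0)\<^esub>\<close>, the coordinate map is the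
  required unitary and turns the restrictions into the stated block diagonal matrices.
  Positivity of the weights is used only to make them bounded.
\<close>

section \<open>Square-summable functions on \<open>\<nat>\<^sup>2\<close>\<close>

lemma ell2_finite_support:
  assumes "finite S" "\<And>k. k \<notin> S \<Longrightarrow> x k = 0"
  shows "x \<in> ell2"
proof -
  have "(\<lambda>k. (cmod (x k))\<^sup>2) summable_on S" using assms(1) by simp
  moreover have "(\<lambda>k. (cmod (x k))\<^sup>2) summable_on S \<longleftrightarrow> (\<lambda>k. (cmod (x k))\<^sup>2) summable_on UNIV"
    by (rule summable_on_cong_neutral) (use assms(2) in auto)
  ultimately show ?thesis unfolding ell2_def by auto
qed

lemma ell2_add:
  assumes "x \<in> ell2" "y \<in> ell2"
  shows "(\<lambda>k. x k + y k) \<in> ell2"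
proof -
  have sq_sum_le: "(a + b)\<^sup>2 \<le> 2 * a\<^sup>2 + 2 * b\<^sup>2" for a b :: real
    using zero_le_power2[of "a - b"] unfolding power2_eq_square by (simp add: algebra_simps)
  have "(\<lambda>k. 2 * (cmod (x k))\<^sup>2 + 2 * (cmod (y k))\<^sup>2) summable_on UNIV"
    using assms unfolding ell2_def by (intro summable_on_add summable_on_cmult_right) auto
  moreover have "(cmod (x k + y k))\<^sup>2 \<le> 2 * (cmod (x k))\<^sup>2 + 2 * (cmod (y k))\<^sup>2" for k
    by (rule order_trans[OF power_mono[OF norm_triangle_ineq] sq_sum_le]) simp
  ultimately show ?thesis
    unfolding ell2_def by (auto intro: summable_on_comparison_test)
qed

lemma ell2_bounded_mult:
  assumes "x \<in> ell2" "\<And>k. cmod (c k) \<le> B"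
  shows "(\<lambda>k. c k * x k) \<in> ell2"
proof -
  have "(\<lambda>k. B\<^sup>2 * (cmod (x k))\<^sup>2) summable_on UNIV"
    using assms unfolding ell2_def by (intro summable_on_cmult_right) auto
  moreover have "(cmod (c k * x k))\<^sup>2 \<le> B\<^sup>2 * (cmod (x k))\<^sup>2" for k
    unfolding norm_mult power_mult_distrib[symmetric]
    by (intro power_mono mult_right_mono assms(2)) auto
  ultimately show ?thesis
    unfolding ell2_def by (auto intro: summable_on_comparison_test)
qed

lemma ell2_reindex:
  assumes "x \<in> ell2" "inj h"
  shows "(\<lambda>j. x (h j)) \<in> ell2"
proof -
  have "(\<lambda>k. (cmod (x k))\<^sup>2) summable_on range h"
    using assms(1) summable_on_subset_banach[of _ UNIV "range h"] unfolding ell2_def by auto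
  then show ?thesis
    using summable_on_reindex[OF assms(2), of "\<lambda>k. (cmod (x k))\<^sup>2"]
    unfolding ell2_def by (simp add: o_def)
qed

lemma ell2_extend:
  assumes "(\<lambda>j. g (h j)) \<in> ell2" "inj h" "\<And>k. k \<notin> range h \<Longrightarrow> g k = 0"
  shows "g \<in> ell2"
proof -
  have "(\<lambda>k. (cmod (g k))\<^sup>2) summable_on range h"
    using assms(1) summable_on_reindex[OF assms(2), of "\<lambda>k. (cmod (g k))\<^sup>2"]
    unfolding ell2_def by (simp add: o_def)
  moreover have "(\<lambda>k. (cmod (g k))\<^sup>2) summable_on range h \<longleftrightarrow> (\<lambda>k. (cmod (g k))\<^sup>2) summable_on UNIV"
    by (rule summable_on_cong_neutral) (use assms(3) in auto)
  ultimately show ?thesis unfolding ell2_def by auto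
qed

lemma infsum_reindex_vanishing:
  assumes "inj h" "\<And>k. k \<notin> range h \<Longrightarrow> f k = 0"
  shows "infsum f UNIV = infsum (\<lambda>j. f (h j)) UNIV"
proof -
  have "infsum f UNIV = infsum f (range h)"
    by (rule infsum_cong_neutral) (use assms(2) in auto)
  also have "\<dots> = infsum (\<lambda>j. f (h j)) UNIV"
    using infsum_reindex[OF assms(1)] by (simp add: o_def)
  finally show ?thesis .
qed

lemma ebasis_ell2: "ebasis k \<in> ell2"
  by (rule ell2_finite_support[of "{k}"]) (auto simp: ebasis_def)

lemma ip_ebasis: "ip (ebasis k) z = cnj (z k)"
proof -
  have "ip (ebasis k) z = infsum (\<lambda>j. ebasis k j * cnj (z j)) {k}"
    unfolding ip_def by (rule infsum_cong_neutral) (auto simp: ebasis_def)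
  then show ?thesis by (simp add: ebasis_def)
qed

lemma adj_eqI:
  assumes "\<And>y. y \<in> ell2 \<Longrightarrow> S y \<in> ell2"
    and "\<And>x y. x \<in> ell2 \<Longrightarrow> y \<in> ell2 \<Longrightarrow> ip (T x) y = ip x (S y)"
    and "y \<in> ell2"
  shows "adj T y = S y"
proof
  let ?P = "\<lambda>S. (\<forall>y\<in>ell2. S y \<in> ell2) \<and> (\<forall>x\<in>ell2. \<forall>y\<in>ell2. ip (T x) y = ip x (S y))"
  have "?P (adj T)"
    unfolding adj_def by (rule someI[of ?P S]) (use assms in auto)
  then have "ip (ebasis k) (adj T y) = ip (ebasis k) (S y)" for k
    using assms ebasis_ell2 by auto
  then show "adj T y k = S y k" for k
    by (simp add: ip_ebasis)
qed

section \<open>The two weighted shifts and their adjoints\<close>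

definition shift1_adjoint :: "(idx \<Rightarrow> real) \<Rightarrow> (idx \<Rightarrow> complex) \<Rightarrow> (idx \<Rightarrow> complex)" where
  "shift1_adjoint \<alpha> y = (\<lambda>(k1, k2). complex_of_real (\<alpha> (k1, k2)) * y (Suc k1, k2))"

definition shift2_adjoint :: "(idx \<Rightarrow> real) \<Rightarrow> (idx \<Rightarrow> complex) \<Rightarrow> (idx \<Rightarrow> complex)" where
  "shift2_adjoint \<beta> y = (\<lambda>(k1, k2). complex_of_real (\<beta> (k1, k2)) * y (k1, Suc k2))"

lemma range_Suc_fst: "range (\<lambda>k. (Suc (fst k), snd k)) = {k :: idx. fst k \<noteq> 0}"
  by (auto simp: image_iff gr0_conv_Suc)

lemma range_Suc_snd: "range (\<lambda>k. (fst k, Suc (snd k))) = {k :: idx. snd k \<noteq> 0}"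
  by (auto simp: image_iff gr0_conv_Suc)

lemma inj_Suc_fst: "inj (\<lambda>k :: idx. (Suc (fst k), snd k))"
  by (auto simp: inj_def)

lemma inj_Suc_snd: "inj (\<lambda>k :: idx. (fst k, Suc (snd k)))"
  by (auto simp: inj_def)

lemma ip_shift1: "ip (shift1 \<alpha> x) y = ip x (shift1_adjoint \<alpha> y)"
proof -
  have "ip (shift1 \<alpha> x) y
      = infsum (\<lambda>k. shift1 \<alpha> x (Suc (fst k), snd k) * cnj (y (Suc (fst k), snd k))) UNIV"
    unfolding ip_def
    by (subst infsum_reindex_vanishing[OF inj_Suc_fst])
       (auto simp: range_Suc_fst shift1_def)
  also have "\<dots> = ip x (shift1_adjoint \<alpha> y)"
    unfolding ip_def by (rule infsum_cong) (auto simp: shift1_def shift1_adjoint_def)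
  finally show ?thesis .
qed

lemma ip_shift2: "ip (shift2 \<beta> x) y = ip x (shift2_adjoint \<beta> y)"
proof -
  have "ip (shift2 \<beta> x) y
      = infsum (\<lambda>k. shift2 \<beta> x (fst k, Suc (snd k)) * cnj (y (fst k, Suc (snd k)))) UNIV"
    unfolding ip_def
    by (subst infsum_reindex_vanishing[OF inj_Suc_snd])
       (auto simp: range_Suc_snd shift2_def)
  also have "\<dots> = ip x (shift2_adjoint \<beta> y)"
    unfolding ip_def by (rule infsum_cong) (auto simp: shift2_def shift2_adjoint_def)
  finally show ?thesis .
qed

context
  fixes w :: "idx \<Rightarrow> real" and B :: real
  assumes weight_bound: "\<And>k. \<bar>w k\<bar> \<le> B"
begin

lemma shift1_ell2: "x \<in> ell2 \<Longrightarrow> shift1 w x \<in> ell2"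
  by (rule ell2_extend[OF _ inj_Suc_fst])
     (auto simp: shift1_def range_Suc_fst weight_bound
           intro: ell2_bounded_mult[where B = B])

lemma shift2_ell2: "x \<in> ell2 \<Longrightarrow> shift2 w x \<in> ell2"
  by (rule ell2_extend[OF _ inj_Suc_snd])
     (auto simp: shift2_def range_Suc_snd weight_bound
           intro: ell2_bounded_mult[where B = B])

lemma shift1_adjoint_ell2: "y \<in> ell2 \<Longrightarrow> shift1_adjoint w y \<in> ell2"
  unfolding shift1_adjoint_def case_prod_unfold
  by (rule ell2_bounded_mult[where B = B]) (auto simp: weight_bound intro: ell2_reindex[OF _ inj_Suc_fst])

lemma shift2_adjoint_ell2: "y \<in> ell2 \<Longrightarrow> shift2_adjoint w y \<in> ell2"
  unfolding shift2_adjoint_def case_prod_unfold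
  by (rule ell2_bounded_mult[where B = B]) (auto simp: weight_bound intro: ell2_reindex[OF _ inj_Suc_snd])

lemma adj_shift1: "y \<in> ell2 \<Longrightarrow> adj (shift1 w) y = shift1_adjoint w y"
  by (rule adj_eqI) (auto simp: shift1_adjoint_ell2 ip_shift1)

lemma adj_shift2: "y \<in> ell2 \<Longrightarrow> adj (shift2 w) y = shift2_adjoint w y"
  by (rule adj_eqI) (auto simp: shift2_adjoint_ell2 ip_shift2)

lemma adj_shift1_ell2: "y \<in> ell2 \<Longrightarrow> adj (shift1 w) y \<in> ell2"
  by (simp add: adj_shift1 shift1_adjoint_ell2)

lemma adj_shift2_ell2: "y \<in> ell2 \<Longrightarrow> adj (shift2 w) y \<in> ell2"
  by (simp add: adj_shift2 shift2_adjoint_ell2)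

end

section \<open>Diagonals and the subspaces \<open>\<K>(n) \<oplus> \<K>(n)\<close>\<close>

definition vanishes_on :: "vec2 \<Rightarrow> idx set \<Rightarrow> bool" where
  "vanishes_on y S \<longleftrightarrow> (\<forall>k\<in>S. fst y k = 0 \<and> snd y k = 0)"

definition diagonal :: "nat \<Rightarrow> idx set" where
  "diagonal n = {k. fst k + snd k = n}"

lemma finite_diagonal: "finite (diagonal n)"
  by (rule finite_subset[of _ "{..n} \<times> {..n}"]) (auto simp: diagonal_def)

lemma card_diagonal: "card (diagonal n) = n + 1"
proof -
  have "diagonal n = (\<lambda>i. (i, n - i)) ` {..n}"
    by (auto simp: diagonal_def image_iff)
  moreover have "inj_on (\<lambda>i. (i, n - i)) {..n}"
    by (auto simp: inj_on_def)
  ultimately show ?thesis by (simp add: card_image)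
qed

lemma Kspace_eq: "Kspace n = {x. \<forall>k. k \<notin> diagonal n \<longrightarrow> x k = 0}"
proof -
  have "x \<in> ell2" if "\<forall>k. k \<notin> diagonal n \<longrightarrow> x k = 0" for x
    using that by (intro ell2_finite_support[OF finite_diagonal]) auto
  then show ?thesis by (auto simp: Kspace_def diagonal_def)
qed

lemma Kspace_times_eq: "Kspace n \<times> Kspace n = {y. vanishes_on y (- diagonal n)}"
  by (auto simp: Kspace_eq vanishes_on_def mem_Times_iff)

lemma vanishes_on_diagonal_neighbours:
  assumes "vanishes_on (y1, y2) (diagonal (a + b))"
  shows "y1 (a, b) = 0" "y2 (a, b) = 0"
    and "1 \<le> a \<Longrightarrow> y2 (a - 1, b + 1) = 0" "1 \<le> b \<Longrightarrow> y1 (a + 1, b - 1) = 0"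
proof -
  have zero: "y1 p = 0 \<and> y2 p = 0" if "fst p + snd p = a + b" for p
    using assms that by (cases p) (simp add: vanishes_on_def diagonal_def)
  show "y1 (a, b) = 0" "y2 (a, b) = 0"
    using zero[of "(a, b)"] by simp_all
  show "1 \<le> a \<Longrightarrow> y2 (a - 1, b + 1) = 0" "1 \<le> b \<Longrightarrow> y1 (a + 1, b - 1) = 0"
    using zero[of "(a - 1, b + 1)"] zero[of "(a + 1, b - 1)"] by simp_all
qed

lemma ip_zero_left: "ip (\<lambda>_. 0) y = 0"
  unfolding ip_def by simp

lemma orth2_Kspace_times: "orth2 (Kspace n \<times> Kspace n) = {y \<in> ell2sum. vanishes_on y (diagonal n)}"
proof (intro equalityI subsetI)
  fix y assume y: "y \<in> orth2 (Kspace n \<times> Kspace n)"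
  have "fst y k = 0 \<and> snd y k = 0" if k: "k \<in> diagonal n" for k
  proof -
    have "ebasis k \<in> Kspace n" "(\<lambda>_. 0) \<in> Kspace n"
      using k by (auto simp: Kspace_eq ebasis_def)
    then have "ip2 (ebasis k, \<lambda>_. 0) y = 0" "ip2 (\<lambda>_. 0, ebasis k) y = 0"
      using y unfolding orth2_def by auto
    then show ?thesis by (simp add: ip2_def ip_ebasis ip_zero_left)
  qed
  then show "y \<in> {y \<in> ell2sum. vanishes_on y (diagonal n)}"
    using y by (auto simp: orth2_def vanishes_on_def)
next
  fix y assume y: "y \<in> {y \<in> ell2sum. vanishes_on y (diagonal n)}"
  have "ip2 x y = 0" if "x \<in> Kspace n \<times> Kspace n" for x
  proof -
    have "ip (fst x) (fst y) = 0" "ip (snd x) (snd y) = 0"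
      unfolding ip_def using that y by (auto simp: Kspace_eq vanishes_on_def intro!: infsum_0)
    then show ?thesis by (simp add: ip2_def)
  qed
  then show "y \<in> orth2 (Kspace n \<times> Kspace n)"
    using y unfolding orth2_def by auto
qed

lemma reduces_Kspace_times:
  assumes closed: "\<And>y. y \<in> ell2sum \<Longrightarrow> A y \<in> ell2sum"
    and local: "\<And>m y. y \<in> ell2sum \<Longrightarrow> vanishes_on y (diagonal m) \<Longrightarrow> vanishes_on (A y) (diagonal m)"
  shows "reduces A (Kspace n \<times> Kspace n)"
  unfolding reduces_def
proof
  show "A ` (Kspace n \<times> Kspace n) \<subseteq> Kspace n \<times> Kspace n"
  proof (rule image_subsetI)
    fix x assume x: "x \<in> Kspace n \<times> Kspace n"
    then have "x \<in> ell2sum" by (auto simp: Kspace_def ell2sum_def)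
    moreover have "vanishes_on x (diagonal m)" if "m \<noteq> n" for m
      using x that by (auto simp: Kspace_times_eq vanishes_on_def diagonal_def)
    ultimately have Ax: "vanishes_on (A x) (diagonal m)" if "m \<noteq> n" for m
      using local that by blast
    have "vanishes_on (A x) (- diagonal n)"
      unfolding vanishes_on_def
    proof
      fix k assume "k \<in> - diagonal n"
      then have "k \<in> diagonal (fst k + snd k)" "fst k + snd k \<noteq> n"
        by (simp_all add: diagonal_def)
      then show "fst (A x) k = 0 \<and> snd (A x) k = 0"
        using Ax[of "fst k + snd k"] unfolding vanishes_on_def by blast
    qed
    then show "A x \<in> Kspace n \<times> Kspace n"
      by (simp add: Kspace_times_eq)
  qed
  show "A ` orth2 (Kspace n \<times> Kspace n) \<subseteq> orth2 (Kspace n \<times> Kspace n)"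
    using closed local by (auto simp: orth2_Kspace_times)
qed

text \<open>\<open>(True, k)\<close> stands for the basis vector \<open>e\<^sub>k \<oplus> 0\<close> and \<open>(False, k)\<close> for \<open>0 \<oplus> e\<^sub>k\<close>.\<close>

definition entry :: "vec2 \<Rightarrow> bool \<times> idx \<Rightarrow> complex" where
  "entry h p = (if fst p then fst h (snd p) else snd h (snd p))"

definition coords :: "(bool \<times> idx) list \<Rightarrow> vec2 \<Rightarrow> complex vec" where
  "coords ps h = vec_of_list (map (entry h) ps)"

lemma dim_coords [simp]: "dim_vec (coords ps h) = length ps"
  by (simp add: coords_def)

lemma list_of_coords: "list_of_vec (coords ps h) = map (entry h) ps"
  unfolding coords_def by (rule list_vec)

lemma coords_index: "i < length ps \<Longrightarrow> coords ps h $ i = entry h (ps ! i)"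
  by (simp add: coords_def vec_of_list_index)

lemma coords_add2: "coords ps (add2 x y) = coords ps x + coords ps y"
  by (rule eq_vecI) (simp_all add: coords_index add2_def entry_def)

lemma coords_scale2: "coords ps (scale2 c x) = c \<cdot>\<^sub>v coords ps x"
  by (rule eq_vecI) (simp_all add: coords_index scale2_def entry_def)

context
  fixes ps :: "(bool \<times> idx) list" and D :: "idx set"
  assumes distinct_ps: "distinct ps" and set_ps: "set ps = UNIV \<times> D"
begin

lemma ip2_eq_coords:
  assumes "vanishes_on x (- D)" "vanishes_on y (- D)"
  shows "ip2 x y = (\<Sum>i<length ps. coords ps x $ i * cnj (coords ps y $ i))"
proof -
  let ?g = "\<lambda>p. entry x p * cnj (entry y p)"
  have "finite D"
    using finite_set[of ps] set_ps by (auto simp: finite_cartesian_product_iff)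
  then have ip: "ip u v = (\<Sum>k\<in>D. u k * cnj (v k))" if "\<forall>k. k \<notin> D \<longrightarrow> u k = 0" for u v
    unfolding ip_def by (subst infsum_cong_neutral[where T = D]) (use that in auto)
  have "(\<Sum>i<length ps. coords ps x $ i * cnj (coords ps y $ i)) = (\<Sum>i<length ps. ?g (ps ! i))"
    by (simp add: coords_index)
  also have "\<dots> = sum_list (map ?g ps)"
    by (simp add: sum_list_sum_nth atLeast0LessThan)
  also have "\<dots> = sum ?g (UNIV \<times> D)"
    by (simp add: sum_list_distinct_conv_sum_set distinct_ps set_ps)
  also have "\<dots> = (\<Sum>b\<in>UNIV. \<Sum>k\<in>D. ?g (b, k))"
    by (simp add: sum.cartesian_product)
  also have "\<dots> = (\<Sum>k\<in>D. ?g (False, k)) + (\<Sum>k\<in>D. ?g (True, k))"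
    unfolding UNIV_bool by simp
  also have "\<dots> = ip2 x y"
    using assms by (simp add: ip2_def entry_def ip vanishes_on_def add.commute)
  finally show ?thesis by simp
qed

lemma inj_on_coords: "inj_on (coords ps) {h. vanishes_on h (- D)}"
proof (rule inj_onI)
  fix x y assume "x \<in> {h. vanishes_on h (- D)}" "y \<in> {h. vanishes_on h (- D)}"
    and eq: "coords ps x = coords ps y"
  then have x: "vanishes_on x (- D)" and y: "vanishes_on y (- D)" by simp_all
  have "map (entry x) ps = map (entry y) ps"
    using arg_cong[OF eq, of list_of_vec] by (simp only: list_of_coords)
  then have "\<forall>p\<in>set ps. entry x p = entry y p"
    by (simp only: map_eq_conv)
  then have entries: "entry x p = entry y p" if "p \<in> UNIV \<times> D" for p
    using that unfolding set_ps by (rule bspec)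
  have "fst x k = fst y k \<and> snd x k = snd y k" for k
  proof (cases "k \<in> D")
    case True
    then show ?thesis using entries[of "(True, k)"] entries[of "(False, k)"] by (simp add: entry_def)
  next
    case False
    then show ?thesis using x y by (simp add: vanishes_on_def)
  qed
  then show "x = y" by (simp add: prod_eq_iff fun_eq_iff)
qed

lemma carrier_vec_subset_coords_image:
  "carrier_vec (length ps) \<subseteq> coords ps ` {h. vanishes_on h (- D)}"
proof
  fix v :: "complex vec" assume v: "v \<in> carrier_vec (length ps)"
  define f where "f p = the (map_of (zip ps (list_of_vec v)) p)" for p
  define h where "h = ((\<lambda>k. if k \<in> D then f (True, k) else 0), (\<lambda>k. if k \<in> D then f (False, k) else 0))"
  have "map (entry h) ps = list_of_vec v"
  proof (rule nth_equalityI)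
    fix i assume "i < length (map (entry h) ps)"
    then have i: "i < length ps" by simp
    have "ps ! i \<in> UNIV \<times> D" using nth_mem[OF i] unfolding set_ps .
    then have "entry h (ps ! i) = f (ps ! i)"
      by (cases "ps ! i") (auto simp: entry_def h_def)
    also have "\<dots> = list_of_vec v ! i"
      using v i map_of_zip_nth[OF _ distinct_ps, of "list_of_vec v" i] by (simp add: f_def)
    finally show "map (entry h) ps ! i = list_of_vec v ! i" using i by simp
  qed (use v in simp)
  then have "coords ps h = v"
    unfolding coords_def by (simp only: vec_list)
  moreover have "vanishes_on h (- D)" by (simp add: h_def vanishes_on_def)
  ultimately show "v \<in> coords ps ` {h. vanishes_on h (- D)}" by blast
qed

lemma coords_bij: "bij_betw (coords ps) {h. vanishes_on h (- D)} (carrier_vec (length ps))"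
proof (rule bij_betw_imageI)
  show "coords ps ` {h. vanishes_on h (- D)} = carrier_vec (length ps)"
  proof
    show "coords ps ` {h. vanishes_on h (- D)} \<subseteq> carrier_vec (length ps)"
      by (rule image_subsetI) (rule carrier_vecI[OF dim_coords])
  qed (rule carrier_vec_subset_coords_image)
qed (rule inj_on_coords)

lemma unit_equiv_restr_coords:
  assumes "M \<in> carrier_mat (length ps) (length ps)"
    and "\<And>x. vanishes_on x (- D) \<Longrightarrow> coords ps (A x) = M *\<^sub>v coords ps x"
  shows "unit_equiv_restr A {x. vanishes_on x (- D)} M"
  unfolding unit_equiv_restr_def
proof (intro exI conjI ballI allI)
  show "M \<in> carrier_mat (length ps) (length ps)" by (fact assms(1))
  show "bij_betw (coords ps) {x. vanishes_on x (- D)} (carrier_vec (length ps))" by (fact coords_bij)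
  fix x y assume "x \<in> {x. vanishes_on x (- D)}" "y \<in> {x. vanishes_on x (- D)}"
  then show "ip2 x y = (\<Sum>i<length ps. coords ps x $ i * cnj (coords ps y $ i))"
    by (simp add: ip2_eq_coords)
qed (simp_all add: coords_add2 coords_scale2 assms(2))

end

section \<open>The block decomposition\<close>

definition Kblocks :: "nat \<Rightarrow> (bool \<times> idx) list list" where
  "Kblocks n = [[(True, (0, n))]]
     @ map (\<lambda>i. [(True, (i, n - i)), (False, (i - 1, n - i + 1))]) [1..<n+1]
     @ [[(False, (n, 0))]]"

definition Kbasis :: "nat \<Rightarrow> (bool \<times> idx) list" where
  "Kbasis n = concat (Kblocks n)"

lemma length_Kbasis: "length (Kbasis n) = 2 * n + 2"
  by (simp add: Kbasis_def Kblocks_def length_concat o_def sum_list_triv)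

lemma set_Kbasis: "set (Kbasis n) = UNIV \<times> diagonal n"
proof
  show "set (Kbasis n) \<subseteq> UNIV \<times> diagonal n"
    by (auto simp: Kbasis_def Kblocks_def diagonal_def)
next
  have block: "[(True, (i, n - i)), (False, (i - 1, n - i + 1))] \<in> set (Kblocks n)"
    if "1 \<le> i" "i \<le> n" for i
    using that by (auto simp: Kblocks_def)
  have first: "(True, (i, n - i)) \<in> set (Kbasis n)" if "i \<le> n" for i
  proof (cases "i = 0")
    case False
    then show ?thesis using block[of i] that by (force simp: Kbasis_def)
  qed (simp add: Kbasis_def Kblocks_def)
  have second: "(False, (i, n - i)) \<in> set (Kbasis n)" if "i \<le> n" for i
  proof (cases "i = n")
    case False
    then have "(False, (Suc i - 1, n - Suc i + 1)) = (False, (i, n - i))" using that by simp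
    then show ?thesis using block[of "Suc i"] that False by (force simp: Kbasis_def)
  qed (simp add: Kbasis_def Kblocks_def)
  show "UNIV \<times> diagonal n \<subseteq> set (Kbasis n)"
  proof
    fix p assume "p \<in> (UNIV :: bool set) \<times> diagonal n"
    then obtain b i where "p = (b, (i, n - i))" "i \<le> n"
      by (cases p) (auto simp: diagonal_def)
    then show "p \<in> set (Kbasis n)"
      using first second by (cases b) auto
  qed
qed

lemma distinct_Kbasis: "distinct (Kbasis n)"
proof (rule card_distinct)
  have "card ((UNIV :: bool set) \<times> diagonal n) = 2 * (n + 1)"
    by (simp add: card_cartesian_product card_diagonal card_UNIV_bool)
  then show "card (set (Kbasis n)) = length (Kbasis n)"
    by (simp add: set_Kbasis length_Kbasis)
qed

lemma vec_of_list_append: "vec_of_list (xs @ ys) = vec_of_list xs @\<^sub>v vec_of_list ys"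
  by (metis list_of_vec_append list_vec vec_list)

lemma diag_block_mat_mult_vec_of_list:
  assumes "\<And>M l. (M, l) \<in> set blocks \<Longrightarrow> M \<in> carrier_mat (length l) (length l)"
  shows "diag_block_mat (map fst blocks) *\<^sub>v vec_of_list (concat (map snd blocks))
    = vec_of_list (concat (map (\<lambda>(M, l). list_of_vec (M *\<^sub>v vec_of_list l)) blocks))"
  using assms
proof (induction blocks)
  case Nil
  show ?case by (rule eq_vecI) auto
next
  case (Cons b blocks)
  obtain M l where b: "b = (M, l)" by force
  let ?D = "diag_block_mat (map fst blocks)"
  let ?m = "length (concat (map snd blocks))"
  have M: "M \<in> carrier_mat (length l) (length l)"
    using Cons.prems b by auto
  have "dim_row (fst p) = length (snd p)" "dim_col (fst p) = length (snd p)" if "p \<in> set blocks" for p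
    using Cons.prems[of "fst p" "snd p"] that by auto
  then have "map (\<lambda>p. dim_row (fst p)) blocks = map (\<lambda>p. length (snd p)) blocks"
    "map (\<lambda>p. dim_col (fst p)) blocks = map (\<lambda>p. length (snd p)) blocks"
    by (metis (no_types, lifting) map_cong)+
  then have "dim_row ?D = ?m" "dim_col ?D = ?m"
    unfolding dim_diag_block_mat length_concat map_map o_def by (simp_all only:)
  then have D: "?D \<in> carrier_mat ?m ?m"
    by (rule carrier_matI)
  have "diag_block_mat (map fst (b # blocks)) = four_block_mat M (0\<^sub>m (length l) ?m) (0\<^sub>m ?m (length l)) ?D"
    using \<open>dim_row ?D = ?m\<close> \<open>dim_col ?D = ?m\<close> carrier_matD[OF M]
    by (simp only: b list.map fst_conv diag_block_mat.simps Let_def)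
  moreover have "vec_of_list (concat (map snd (b # blocks))) = vec_of_list l @\<^sub>v vec_of_list (concat (map snd blocks))"
    by (simp only: b list.map snd_conv concat.simps vec_of_list_append)
  ultimately have "diag_block_mat (map fst (b # blocks)) *\<^sub>v vec_of_list (concat (map snd (b # blocks)))
      = M *\<^sub>v vec_of_list l @\<^sub>v ?D *\<^sub>v vec_of_list (concat (map snd blocks))"
    using mult_mat_vec_split[OF M D] by (simp only: carrier_vecI dim_vec_of_list)
  also have "\<dots> = vec_of_list (concat (map (\<lambda>(M, l). list_of_vec (M *\<^sub>v vec_of_list l)) (b # blocks)))"
    using Cons.IH Cons.prems by (simp only: b list.map prod.case concat.simps vec_of_list_append vec_list
        list.set_intros(2) simp_thms)
  finally show ?case .
qed

lemma sq_mult_vec_of_list: "list_of_vec (sq a *\<^sub>v vec_of_list [u]) = [a * u]"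
proof -
  have "sq a *\<^sub>v vec_of_list [u] = vec_of_list [a * u]"
    by (rule eq_vecI) (auto simp: sq_def scalar_prod_def vec_of_list_index)
  then show ?thesis by (simp only: list_vec)
qed

lemma blk_mult_vec_of_list:
  "list_of_vec (blk a b c d *\<^sub>v vec_of_list [u, w]) = [a * u + b * w, c * u + d * w]"
proof -
  have "blk a b c d *\<^sub>v vec_of_list [u, w] = vec_of_list [a * u + b * w, c * u + d * w]"
    by (rule eq_vecI)
       (auto simp: blk_def scalar_prod_def vec_of_list_index numeral_2_eq_2 less_Suc_eq)
  then show ?thesis by (simp only: list_vec)
qed

lemma Lmat_carrier: "Lmat \<alpha> \<beta> n \<in> carrier_mat (2 * n + 2) (2 * n + 2)"
  by (rule carrier_matI)
     (simp_all add: Lmat_def dim_diag_block_mat sq_def blk_def o_def sum_list_triv del: upt_Suc)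

lemma Rmat_carrier: "Rmat \<alpha> \<beta> n \<in> carrier_mat (2 * n + 2) (2 * n + 2)"
  by (rule carrier_matI)
     (simp_all add: Rmat_def dim_diag_block_mat sq_def blk_def o_def sum_list_triv del: upt_Suc)

lemma opmat_ell2sum:
  assumes "\<And>x. x \<in> ell2 \<Longrightarrow> M11 x \<in> ell2" "\<And>x. x \<in> ell2 \<Longrightarrow> M12 x \<in> ell2"
    "\<And>x. x \<in> ell2 \<Longrightarrow> M21 x \<in> ell2" "\<And>x. x \<in> ell2 \<Longrightarrow> M22 x \<in> ell2"
    "h \<in> ell2sum"
  shows "opmat M11 M12 M21 M22 h \<in> ell2sum"
  using assms(5) by (auto simp: opmat_def ell2sum_def intro!: ell2_add assms(1-4))

context
  fixes \<alpha> \<beta> :: "idx \<Rightarrow> real" and B :: real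
  assumes \<alpha>_bound: "\<And>k. \<bar>\<alpha> k\<bar> \<le> B" and \<beta>_bound: "\<And>k. \<bar>\<beta> k\<bar> \<le> B"
begin

lemma Lop_ell2sum: "y \<in> ell2sum \<Longrightarrow> Lop \<alpha> \<beta> y \<in> ell2sum"
  unfolding Lop_def Let_def
  by (rule opmat_ell2sum)
     (simp_all add: shift1_ell2[OF \<alpha>_bound] shift2_ell2[OF \<beta>_bound]
       adj_shift1_ell2[OF \<alpha>_bound] adj_shift2_ell2[OF \<beta>_bound])

lemma Rop_ell2sum: "y \<in> ell2sum \<Longrightarrow> Rop \<alpha> \<beta> y \<in> ell2sum"
  unfolding Rop_def Let_def
  by (rule opmat_ell2sum)
     (simp_all add: shift1_ell2[OF \<alpha>_bound] shift2_ell2[OF \<beta>_bound]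
       adj_shift1_ell2[OF \<alpha>_bound] adj_shift2_ell2[OF \<beta>_bound])

lemma Lop_eq:
  assumes "x1 \<in> ell2" "x2 \<in> ell2"
  shows "Lop \<alpha> \<beta> (x1, x2) =
    (\<lambda>k. shift1_adjoint \<alpha> (shift1 \<alpha> x1) k + shift2_adjoint \<beta> (shift1 \<alpha> x2) k,
     \<lambda>k. shift1_adjoint \<alpha> (shift2 \<beta> x1) k + shift2_adjoint \<beta> (shift2 \<beta> x2) k)"
  using assms
  by (simp add: Lop_def Let_def opmat_def adj_shift1[OF \<alpha>_bound] adj_shift2[OF \<beta>_bound]
      shift1_ell2[OF \<alpha>_bound] shift2_ell2[OF \<beta>_bound])

lemma Rop_eq:
  assumes "x1 \<in> ell2" "x2 \<in> ell2"
  shows "Rop \<alpha> \<beta> (x1, x2) =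
    (\<lambda>k. shift1 \<alpha> (shift1_adjoint \<alpha> x1) k + shift1 \<alpha> (shift2_adjoint \<beta> x2) k,
     \<lambda>k. shift2 \<beta> (shift1_adjoint \<alpha> x1) k + shift2 \<beta> (shift2_adjoint \<beta> x2) k)"
  using assms by (simp add: Rop_def Let_def opmat_def adj_shift1[OF \<alpha>_bound] adj_shift2[OF \<beta>_bound])

lemma Lop_apply:
  assumes "x1 \<in> ell2" "x2 \<in> ell2"
  shows "fst (Lop \<alpha> \<beta> (x1, x2)) (i, m) = complex_of_real ((\<alpha> (i, m))\<^sup>2) * x1 (i, m)
      + (if 1 \<le> i then complex_of_real (\<alpha> (i - 1, m + 1) * \<beta> (i, m)) * x2 (i - 1, m + 1) else 0)"
    and "snd (Lop \<alpha> \<beta> (x1, x2)) (i, m) =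
      (if 1 \<le> m then complex_of_real (\<alpha> (i, m) * \<beta> (i + 1, m - 1)) * x1 (i + 1, m - 1) else 0)
      + complex_of_real ((\<beta> (i, m))\<^sup>2) * x2 (i, m)"
  using assms
  by (simp_all add: Lop_eq shift1_def shift2_def shift1_adjoint_def shift2_adjoint_def power2_eq_square)

lemma Rop_apply:
  assumes "x1 \<in> ell2" "x2 \<in> ell2"
  shows "fst (Rop \<alpha> \<beta> (x1, x2)) (i, m) = (if 1 \<le> i then
        complex_of_real ((\<alpha> (i - 1, m))\<^sup>2) * x1 (i, m)
      + complex_of_real (\<alpha> (i - 1, m) * \<beta> (i - 1, m)) * x2 (i - 1, m + 1) else 0)"
    and "snd (Rop \<alpha> \<beta> (x1, x2)) (i, m) = (if 1 \<le> m then
        complex_of_real (\<alpha> (i, m - 1) * \<beta> (i, m - 1)) * x1 (i + 1, m - 1)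
      + complex_of_real ((\<beta> (i, m - 1))\<^sup>2) * x2 (i, m) else 0)"
  using assms
  by (simp_all add: Rop_eq shift1_def shift2_def shift1_adjoint_def shift2_adjoint_def power2_eq_square algebra_simps)

lemma Lop_vanishes_on_diagonal:
  assumes "y \<in> ell2sum" "vanishes_on y (diagonal m)"
  shows "vanishes_on (Lop \<alpha> \<beta> y) (diagonal m)"
proof -
  obtain y1 y2 where y: "y = (y1, y2)" by force
  have e: "y1 \<in> ell2" "y2 \<in> ell2" using assms(1) y by (auto simp: ell2sum_def)
  have "fst (Lop \<alpha> \<beta> y) (a, b) = 0 \<and> snd (Lop \<alpha> \<beta> y) (a, b) = 0" if "a + b = m" for a b
    using vanishes_on_diagonal_neighbours[of y1 y2 a b] assms(2) that by (simp add: y Lop_apply[OF e])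
  then show ?thesis
    unfolding vanishes_on_def diagonal_def by auto
qed

lemma Rop_vanishes_on_diagonal:
  assumes "y \<in> ell2sum" "vanishes_on y (diagonal m)"
  shows "vanishes_on (Rop \<alpha> \<beta> y) (diagonal m)"
proof -
  obtain y1 y2 where y: "y = (y1, y2)" by force
  have e: "y1 \<in> ell2" "y2 \<in> ell2" using assms(1) y by (auto simp: ell2sum_def)
  have "fst (Rop \<alpha> \<beta> y) (a, b) = 0 \<and> snd (Rop \<alpha> \<beta> y) (a, b) = 0" if "a + b = m" for a b
    using vanishes_on_diagonal_neighbours[of y1 y2 a b] assms(2) that by (simp add: y Rop_apply[OF e])
  then show ?thesis
    unfolding vanishes_on_def diagonal_def by auto
qed

lemma coords_Kbasis_Lop:
  assumes "vanishes_on x (- diagonal n)"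
  shows "coords (Kbasis n) (Lop \<alpha> \<beta> x) = Lmat \<alpha> \<beta> n *\<^sub>v coords (Kbasis n) x"
proof -
  obtain x1 x2 where x: "x = (x1, x2)" by force
  have "x \<in> Kspace n \<times> Kspace n"
    using assms by (simp add: Kspace_times_eq)
  then have e: "x1 \<in> ell2" "x2 \<in> ell2"
    using x by (auto simp: Kspace_def)
  define blocks where "blocks = [(sq (complex_of_real ((\<alpha> (0, n))\<^sup>2)), [x1 (0, n)])]
      @ map (\<lambda>i. (blk (complex_of_real ((\<alpha> (i, n - i))\<^sup>2))
                     (complex_of_real (\<alpha> (i - 1, n - i + 1) * \<beta> (i, n - i)))
                     (complex_of_real (\<alpha> (i - 1, n - i + 1) * \<beta> (i, n - i)))
                     (complex_of_real ((\<beta> (i - 1, n - i + 1))\<^sup>2)),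
                [x1 (i, n - i), x2 (i - 1, n - i + 1)])) [1..<n+1]
      @ [(sq (complex_of_real ((\<beta> (n, 0))\<^sup>2)), [x2 (n, 0)])]"
  have carrier: "\<And>M l. (M, l) \<in> set blocks \<Longrightarrow> M \<in> carrier_mat (length l) (length l)"
    by (auto simp: blocks_def sq_def blk_def)
  have mat: "Lmat \<alpha> \<beta> n = diag_block_mat (map fst blocks)"
    by (simp add: blocks_def Lmat_def o_def del: upt_Suc)
  have entries: "map (entry x) (Kbasis n) = concat (map snd blocks)"
    by (simp add: Kbasis_def Kblocks_def blocks_def map_concat entry_def x o_def del: upt_Suc)
  have image_entries:
    "map (entry (Lop \<alpha> \<beta> x)) (Kbasis n) = concat (map (\<lambda>(M, l). list_of_vec (M *\<^sub>v vec_of_list l)) blocks)"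
    \<comment> \<open>writing \<open>[1..<n+1]\<close> as \<open>map Suc [0..<n]\<close> lets \<open>simp\<close> evaluate \<open>i - 1\<close> and \<open>if 1 \<le> i\<close>\<close>
    by (simp add: Kbasis_def Kblocks_def blocks_def map_concat entry_def x Lop_apply[OF e]
        sq_mult_vec_of_list blk_mult_vec_of_list o_def map_Suc_upt[symmetric]
        del: upt_Suc vec_of_list_Cons)
  show ?thesis
    unfolding coords_def mat entries image_entries
    by (rule diag_block_mat_mult_vec_of_list[OF carrier, symmetric])
qed

lemma coords_Kbasis_Rop:
  assumes "vanishes_on x (- diagonal n)"
  shows "coords (Kbasis n) (Rop \<alpha> \<beta> x) = Rmat \<alpha> \<beta> n *\<^sub>v coords (Kbasis n) x"
proof -
  obtain x1 x2 where x: "x = (x1, x2)" by force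
  have "x \<in> Kspace n \<times> Kspace n"
    using assms by (simp add: Kspace_times_eq)
  then have e: "x1 \<in> ell2" "x2 \<in> ell2"
    using x by (auto simp: Kspace_def)
  define blocks where "blocks = [(sq 0, [x1 (0, n)])]
      @ map (\<lambda>i. (blk (complex_of_real ((\<alpha> (i - 1, n - i))\<^sup>2))
                     (complex_of_real (\<alpha> (i - 1, n - i) * \<beta> (i - 1, n - i)))
                     (complex_of_real (\<alpha> (i - 1, n - i) * \<beta> (i - 1, n - i)))
                     (complex_of_real ((\<beta> (i - 1, n - i))\<^sup>2)),
                [x1 (i, n - i), x2 (i - 1, n - i + 1)])) [1..<n+1]
      @ [(sq 0, [x2 (n, 0)])]"
  have carrier: "\<And>M l. (M, l) \<in> set blocks \<Longrightarrow> M \<in> carrier_mat (length l) (length l)"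
    by (auto simp: blocks_def sq_def blk_def)
  have mat: "Rmat \<alpha> \<beta> n = diag_block_mat (map fst blocks)"
    by (simp add: blocks_def Rmat_def o_def del: upt_Suc)
  have entries: "map (entry x) (Kbasis n) = concat (map snd blocks)"
    by (simp add: Kbasis_def Kblocks_def blocks_def map_concat entry_def x o_def del: upt_Suc)
  have image_entries:
    "map (entry (Rop \<alpha> \<beta> x)) (Kbasis n) = concat (map (\<lambda>(M, l). list_of_vec (M *\<^sub>v vec_of_list l)) blocks)"
    by (simp add: Kbasis_def Kblocks_def blocks_def map_concat entry_def x Rop_apply[OF e]
        sq_mult_vec_of_list blk_mult_vec_of_list o_def map_Suc_upt[symmetric]
        del: upt_Suc vec_of_list_Cons)
  show ?thesis
    unfolding coords_def mat entries image_entries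
    by (rule diag_block_mat_mult_vec_of_list[OF carrier, symmetric])
qed

end

theorem theorem3p1:
  fixes \<alpha> \<beta> :: "nat \<times> nat \<Rightarrow> real" and n :: nat
  assumes "\<forall>k. \<alpha> k > 0" and "\<forall>k. \<beta> k > 0"
    and "bdd_above (range \<alpha>)" and "bdd_above (range \<beta>)"
  shows "reduces (Lop \<alpha> \<beta>) (Kspace n \<times> Kspace n) \<and> reduces (Rop \<alpha> \<beta>) (Kspace n \<times> Kspace n)
    \<and> unit_equiv_restr (Lop \<alpha> \<beta>) (Kspace n \<times> Kspace n) (Lmat \<alpha> \<beta> n)
    \<and> unit_equiv_restr (Rop \<alpha> \<beta>) (Kspace n \<times> Kspace n) (Rmat \<alpha> \<beta> n)"
proof -
  obtain a b where "\<And>k. \<alpha> k \<le> a" "\<And>k. \<beta> k \<le> b"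
    using assms(3,4) by (auto simp: bdd_above_def)
  moreover have "\<alpha> k > 0" "\<beta> k > 0" for k
    using assms(1,2) by blast+
  ultimately have \<alpha>_bound: "\<And>k. \<bar>\<alpha> k\<bar> \<le> max a b" and \<beta>_bound: "\<And>k. \<bar>\<beta> k\<bar> \<le> max a b"
    by (simp_all add: abs_of_pos le_max_iff_disj)
  note L = Lop_ell2sum[OF \<alpha>_bound \<beta>_bound] Lop_vanishes_on_diagonal[OF \<alpha>_bound \<beta>_bound]
    coords_Kbasis_Lop[OF \<alpha>_bound \<beta>_bound]
  note R = Rop_ell2sum[OF \<alpha>_bound \<beta>_bound] Rop_vanishes_on_diagonal[OF \<alpha>_bound \<beta>_bound]
    coords_Kbasis_Rop[OF \<alpha>_bound \<beta>_bound]
  show ?thesis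
  proof (intro conjI)
    show "reduces (Lop \<alpha> \<beta>) (Kspace n \<times> Kspace n)"
      by (rule reduces_Kspace_times[OF L(1,2)])
    show "reduces (Rop \<alpha> \<beta>) (Kspace n \<times> Kspace n)"
      by (rule reduces_Kspace_times[OF R(1,2)])
    show "unit_equiv_restr (Lop \<alpha> \<beta>) (Kspace n \<times> Kspace n) (Lmat \<alpha> \<beta> n)"
      unfolding Kspace_times_eq using Lmat_carrier[folded length_Kbasis] L(3)
      by (rule unit_equiv_restr_coords[OF distinct_Kbasis set_Kbasis])
    show "unit_equiv_restr (Rop \<alpha> \<beta>) (Kspace n \<times> Kspace n) (Rmat \<alpha> \<beta> n)"
      unfolding Kspace_times_eq using Rmat_carrier[folded length_Kbasis] R(3)
      by (rule unit_equiv_restr_coords[OF distinct_Kbasis set_Kbasis])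
  qed
qed

end
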